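(* Let $r\ge 2$ and $n\ge 2r$, and let $\mathrm{Fork}_{n,r}(x)=n+1$ if $x=0^r1^{n-r}$ (the valley), $n+2$ if $x=1^{n-r}0^r$ (the optimum), and $|x|_1$ otherwise. For any run of the (1+1) EA (mutation probability $1/n$, uniform random initialization) on $\mathrm{Fork}_{n,r}$, let $V$ be the event that the valley occurs as the current best solution before the optimum does. Then $\Pr(V)=\tfrac12$.
   Context: The (1+1) EA with mutation probability $1/n$: start with $x$ uniform in $\{0,1\}^n$; each iteration create $y$ by flipping each bit of $x$ independently with probability $1/n$, and set $x\gets y$ if $f(y)\ge f(x)$. *)

theory Defs
  imports "HOL-Probability.Probability"
begin

text \<open>Bit strings of length n are bool lists (False = 0, True = 1).\<close>

definition ones :: "bool list \<Rightarrow> nat" where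
  "ones x = length (filter id x)"

definition valley :: "nat \<Rightarrow> nat \<Rightarrow> bool list" where
  "valley n r = replicate r False @ replicate (n - r) True"

definition optimum :: "nat \<Rightarrow> nat \<Rightarrow> bool list" where
  "optimum n r = replicate (n - r) True @ replicate r False"

definition Fork :: "nat \<Rightarrow> nat \<Rightarrow> bool list \<Rightarrow> nat" where
  "Fork n r x = (if x = valley n r then n + 1
                 else if x = optimum n r then n + 2
                 else ones x)"

primrec mutate :: "real \<Rightarrow> bool list \<Rightarrow> bool list pmf" where
  "mutate p [] = return_pmf []"
| "mutate p (b # bs) =
     bind_pmf (bernoulli_pmf p) (\<lambda>c. bind_pmf (mutate p bs) (\<lambda>ys. return_pmf ((b \<noteq> c) # ys)))"

definition init :: "nat \<Rightarrow> bool list pmf" where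
  "init n = pmf_of_set {x. length x = n}"

definition ea_step :: "(bool list \<Rightarrow> nat) \<Rightarrow> nat \<Rightarrow> bool list \<Rightarrow> bool list pmf" where
  "ea_step f n x = bind_pmf (mutate (1 / real n) x)
                      (\<lambda>y. return_pmf (if f y \<ge> f x then y else x))"

fun ea_traj :: "(bool list \<Rightarrow> nat) \<Rightarrow> nat \<Rightarrow> nat \<Rightarrow> bool list list pmf" where
  "ea_traj f n 0 = map_pmf (\<lambda>x. [x]) (init n)"
| "ea_traj f n (Suc t) = bind_pmf (ea_traj f n t)
      (\<lambda>xs. map_pmf (\<lambda>y. xs @ [y]) (ea_step f n (last xs)))"

definition valley_first :: "nat \<Rightarrow> nat \<Rightarrow> bool list list set" where
  "valley_first n r = {xs. \<exists>i < length xs. xs ! i = valley n r \<and>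
                            (\<forall>j \<le> i. xs ! j \<noteq> optimum n r)}"

end

(*
  Stop the (1+1) EA as soon as it reaches the valley or the optimum; this does not change which
  of the two is reached first. The stopped process is invariant under reversal of bit strings:
  mutation commutes with reversal, the uniform initial distribution is reversal invariant, and
  reversal maps valley and optimum to each other and otherwise preserves Fork, except that it
  swaps their fitness values n + 1 and n + 2, which is harmless because both exceed the
  fitness of every other string. Hence valley and optimum are equally likely to have been hit
  first at every time t. From every other string, the mutation producing exactly the valley has
  probability at least n^-n and is always accepted, so the probability that neither target has
  been hit by time t is at most (1 - n^-n)^t, which tends to 0.
*)
theory Submission
  imports Defs
begin

lemma set_pmf_mutate_length: "y \<in> set_pmf (mutate p x) \<Longrightarrow> length y = length x"
  by (induction x arbitrary: y) (auto simp: set_bind_pmf)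

lemma mutate_append:
  "mutate p (xs @ ys) = bind_pmf (mutate p xs) (\<lambda>a. map_pmf (\<lambda>b. a @ b) (mutate p ys))"
  by (induction xs) (simp_all add: bind_return_pmf bind_return_pmf' bind_assoc_pmf map_bind_pmf map_pmf_def)

lemma map_pmf_rev_mutate: "map_pmf rev (mutate p x) = mutate p (rev x)"
proof (induction x)
  case Nil
  then show ?case by simp
next
  case (Cons b bs)
  have "map_pmf rev (mutate p (b # bs)) =
     bind_pmf (bernoulli_pmf p) (\<lambda>c. bind_pmf (mutate p bs) (\<lambda>ys. return_pmf (rev ys @ [b \<noteq> c])))"
    by (simp add: map_bind_pmf)
  also have "\<dots> = bind_pmf (mutate p bs) (\<lambda>ys. bind_pmf (bernoulli_pmf p) (\<lambda>c. return_pmf (rev ys @ [b \<noteq> c])))"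
    by (rule bind_commute_pmf)
  also have "\<dots> = bind_pmf (map_pmf rev (mutate p bs)) (\<lambda>ys. map_pmf (\<lambda>z. ys @ z) (mutate p [b]))"
    by (simp add: bind_map_pmf map_pmf_def bind_assoc_pmf bind_return_pmf)
  also have "\<dots> = mutate p (rev (b # bs))"
    by (simp add: Cons mutate_append)
  finally show ?case .
qed

lemma pmf_map_pmf_Cons: "pmf (map_pmf ((#) a) M) (c # ys) = (if a = c then pmf M ys else 0)"
proof (cases "a = c")
  case True
  then show ?thesis using pmf_map_inj'[of "(#) a" M ys] by (simp add: inj_def)
next
  case False
  then have "c # ys \<notin> (#) a ` set_pmf M" by auto
  then show ?thesis using False by (simp add: pmf_map_outside)
qed

lemma pmf_mutate_Cons:
  assumes "0 \<le> p" "p \<le> 1"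
  shows "pmf (mutate p (b # bs)) (c # ys) = (if b = c then 1 - p else p) * pmf (mutate p bs) ys"
  using assms by (cases b; cases c) (simp_all add: pmf_bind map_pmf_def[symmetric] pmf_map_pmf_Cons)

lemma pmf_mutate_ge:
  assumes "0 \<le> p" "p \<le> 1" "length y = length x"
  shows "min p (1 - p) ^ length x \<le> pmf (mutate p x) y"
  using assms(3)
proof (induction x arbitrary: y)
  case Nil
  then show ?case by simp
next
  case (Cons b bs)
  then obtain c ys where y: "y = c # ys" and "length ys = length bs"
    by (cases y) auto
  then have "min p (1 - p) ^ length bs \<le> pmf (mutate p bs) ys"
    using Cons.IH by blast
  then have "min p (1 - p) ^ length (b # bs) \<le> min p (1 - p) * pmf (mutate p bs) ys"
    using assms by (simp add: mult_left_mono)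
  also have "\<dots> \<le> (if b = c then 1 - p else p) * pmf (mutate p bs) ys"
    by (intro mult_right_mono) auto
  also have "\<dots> = pmf (mutate p (b # bs)) y"
    by (simp only: y pmf_mutate_Cons[OF assms(1,2)])
  finally show ?case .
qed

primrec chain_dist :: "'a pmf \<Rightarrow> ('a \<Rightarrow> 'a pmf) \<Rightarrow> nat \<Rightarrow> 'a pmf" where
  "chain_dist \<mu> K 0 = \<mu>"
| "chain_dist \<mu> K (Suc t) = bind_pmf (chain_dist \<mu> K t) K"

definition stop_on :: "'a set \<Rightarrow> ('a \<Rightarrow> 'a pmf) \<Rightarrow> 'a \<Rightarrow> 'a pmf" where
  "stop_on T K x = (if x \<in> T then return_pmf x else K x)"

text \<open>If no element lies in \<open>T\<close>, \<open>first_hit T xs\<close> is the last element, i.e. the current state of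
  the chain stopped on \<open>T\<close>.\<close>
definition first_hit :: "'a set \<Rightarrow> 'a list \<Rightarrow> 'a" where
  "first_hit T xs = (case find (\<lambda>x. x \<in> T) xs of Some x \<Rightarrow> x | None \<Rightarrow> last xs)"

lemma set_pmf_chain_dist_subset:
  assumes "set_pmf \<mu> \<subseteq> S" "\<And>x. x \<in> S \<Longrightarrow> set_pmf (K x) \<subseteq> S"
  shows "set_pmf (chain_dist \<mu> K t) \<subseteq> S"
  using assms by (induction t) (auto simp: set_bind_pmf)

lemma map_pmf_chain_dist_invariant:
  assumes "set_pmf \<mu> \<subseteq> S" "\<And>x. x \<in> S \<Longrightarrow> set_pmf (K x) \<subseteq> S"
    and "map_pmf g \<mu> = \<mu>" "\<And>x. x \<in> S \<Longrightarrow> map_pmf g (K x) = K (g x)"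
  shows "map_pmf g (chain_dist \<mu> K t) = chain_dist \<mu> K t"
proof (induction t)
  case 0
  then show ?case using assms(3) by simp
next
  case (Suc t)
  have "set_pmf (chain_dist \<mu> K t) \<subseteq> S"
    using assms(1,2) by (rule set_pmf_chain_dist_subset)
  then have "map_pmf g (chain_dist \<mu> K (Suc t)) = bind_pmf (chain_dist \<mu> K t) (\<lambda>x. K (g x))"
    unfolding chain_dist.simps map_bind_pmf using assms(4) by (intro bind_pmf_cong) auto
  also have "\<dots> = bind_pmf (map_pmf g (chain_dist \<mu> K t)) K"
    by (simp add: bind_map_pmf)
  also have "\<dots> = chain_dist \<mu> K (Suc t)"
    using Suc by simp
  finally show ?case .
qed

lemma measure_bind_pmf_le:
  fixes M :: "'a pmf" and N :: "'a \<Rightarrow> 'b pmf"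
  assumes "0 \<le> q" "\<And>x. x \<in> set_pmf M \<Longrightarrow> measure (N x) A \<le> q * indicator B x"
  shows "measure (bind_pmf M N) A \<le> q * measure M B"
proof -
  have "emeasure (bind_pmf M N) A = (\<integral>\<^sup>+x. emeasure (N x) A \<partial>M)"
    by simp
  also have "\<dots> \<le> (\<integral>\<^sup>+x. ennreal q * indicator B x \<partial>M)"
    using assms by (intro nn_integral_mono_AE)
      (auto simp: AE_measure_pmf_iff measure_pmf.emeasure_eq_measure ennreal_leI
        simp flip: ennreal_indicator ennreal_mult)
  also have "\<dots> = ennreal (q * measure M B)"
    using assms(1) by (simp add: nn_integral_cmult_indicator measure_pmf.emeasure_eq_measure ennreal_mult)
  finally show ?thesis
    using assms(1) by (simp add: measure_pmf.emeasure_eq_measure ennreal_le_iff)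
qed

lemma measure_chain_dist_stop_on_le:
  assumes "set_pmf \<mu> \<subseteq> S" "\<And>x. x \<in> S \<Longrightarrow> set_pmf (K x) \<subseteq> S"
    and "0 \<le> q" "\<And>x. x \<in> S \<Longrightarrow> x \<notin> T \<Longrightarrow> measure (K x) (- T) \<le> q"
  shows "measure (chain_dist \<mu> (stop_on T K) t) (- T) \<le> q ^ t"
proof (induction t)
  case 0
  then show ?case by simp
next
  case (Suc t)
  have "set_pmf (chain_dist \<mu> (stop_on T K) t) \<subseteq> S"
    using assms(1,2) by (intro set_pmf_chain_dist_subset) (auto simp: stop_on_def)
  then have "measure (chain_dist \<mu> (stop_on T K) (Suc t)) (- T)
      \<le> q * measure (chain_dist \<mu> (stop_on T K) t) (- T)"
    unfolding chain_dist.simps using assms(3,4)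
    by (intro measure_bind_pmf_le) (auto simp: stop_on_def)
  also have "\<dots> \<le> q ^ Suc t"
    using Suc assms(3) by (simp add: mult_left_mono)
  finally show ?case .
qed

lemma first_hit_Cons:
  "first_hit T (x # xs) = (if x \<in> T \<or> xs = [] then x else first_hit T xs)"
  by (auto simp: first_hit_def split: option.splits)

lemma first_hit_snoc:
  "first_hit T (xs @ [y]) = (if \<exists>x\<in>set xs. x \<in> T then first_hit T xs else y)"
  by (induction xs) (auto simp: first_hit_Cons)

lemma first_hit_in_iff:
  "xs \<noteq> [] \<Longrightarrow> first_hit T xs \<in> T \<longleftrightarrow> (\<exists>x\<in>set xs. x \<in> T)"
  by (induction xs) (auto simp: first_hit_Cons)

lemma first_hit_eq_last: "\<not> (\<exists>x\<in>set xs. x \<in> T) \<Longrightarrow> first_hit T xs = last xs"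
  unfolding first_hit_def by (subst find_None_iff[THEN iffD2]) auto

lemma first_hit_eq_iff:
  assumes "a \<noteq> b" "xs \<noteq> []"
  shows "first_hit {a, b} xs = a \<longleftrightarrow> (\<exists>i<length xs. xs ! i = a \<and> (\<forall>j\<le>i. xs ! j \<noteq> b))"
  using assms(2)
proof (induction xs)
  case Nil
  then show ?case by simp
next
  case (Cons x xs)
  have "(\<exists>i<length (x # xs). (x # xs) ! i = a \<and> (\<forall>j\<le>i. (x # xs) ! j \<noteq> b))
      \<longleftrightarrow> x = a \<or> x \<noteq> b \<and> (\<exists>i<length xs. xs ! i = a \<and> (\<forall>j\<le>i. xs ! j \<noteq> b))"
    using assms(1) unfolding length_Cons Ex_less_Suc2
    by (auto simp: All_less_Suc2 simp flip: less_Suc_eq_le)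
  then show ?case
    using Cons assms(1) by (auto simp: first_hit_Cons)
qed

lemma length_ea_traj: "xs \<in> set_pmf (ea_traj f n t) \<Longrightarrow> length xs = Suc t"
  by (induction t arbitrary: xs) auto

lemma map_pmf_first_hit_ea_traj:
  "map_pmf (first_hit T) (ea_traj f n t) = chain_dist (init n) (stop_on T (ea_step f n)) t"
proof (induction t)
  case 0
  have "first_hit T \<circ> (\<lambda>x. [x]) = id"
    by (auto simp: first_hit_def)
  then show ?case by (simp add: pmf.map_comp)
next
  case (Suc t)
  have "map_pmf (first_hit T) (ea_traj f n (Suc t)) =
      bind_pmf (ea_traj f n t) (\<lambda>xs. map_pmf (\<lambda>y. first_hit T (xs @ [y])) (ea_step f n (last xs)))"
    by (simp add: map_bind_pmf pmf.map_comp o_def)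
  also have "\<dots> = bind_pmf (ea_traj f n t) (\<lambda>xs. stop_on T (ea_step f n) (first_hit T xs))"
  proof (rule bind_pmf_cong[OF refl])
    fix xs
    assume "xs \<in> set_pmf (ea_traj f n t)"
    then have "xs \<noteq> []"
      using length_ea_traj by fastforce
    then show "map_pmf (\<lambda>y. first_hit T (xs @ [y])) (ea_step f n (last xs))
        = stop_on T (ea_step f n) (first_hit T xs)"
      by (cases "\<exists>x\<in>set xs. x \<in> T")
        (simp_all add: first_hit_snoc first_hit_in_iff first_hit_eq_last stop_on_def pmf.map_ident)
  qed
  also have "\<dots> = chain_dist (init n) (stop_on T (ea_step f n)) (Suc t)"
    by (simp add: Suc[symmetric] bind_map_pmf)
  finally show ?case .
qed

lemma set_pmf_ea_step_length: "y \<in> set_pmf (ea_step f n x) \<Longrightarrow> length y = length x"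
  by (auto simp: ea_step_def set_bind_pmf split: if_splits dest: set_pmf_mutate_length)

lemma map_pmf_ea_step:
  assumes "map_pmf g (mutate (1 / real n) x) = mutate (1 / real n) (g x)"
    and "\<And>y. y \<in> set_pmf (mutate (1 / real n) x) \<Longrightarrow> f (g x) \<le> f (g y) \<longleftrightarrow> f x \<le> f y"
  shows "map_pmf g (ea_step f n x) = ea_step f n (g x)"
proof -
  have "map_pmf g (ea_step f n x) = bind_pmf (mutate (1 / real n) x)
      (\<lambda>y. return_pmf (if f (g x) \<le> f (g y) then g y else g x))"
    using assms(2) by (auto simp: ea_step_def map_bind_pmf intro!: bind_pmf_cong)
  also have "\<dots> = ea_step f n (g x)"
    by (simp add: ea_step_def bind_map_pmf flip: assms(1))
  finally show ?thesis .
qed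

lemma pmf_ea_step_ge:
  assumes "f x \<le> f y"
  shows "pmf (mutate (1 / real n) x) y \<le> pmf (ea_step f n x) y"
proof -
  let ?g = "\<lambda>z. if f x \<le> f z then z else x"
  have "pmf (ea_step f n x) y = measure (mutate (1 / real n) x) (?g -` {y})"
    by (simp add: ea_step_def map_pmf_def [symmetric] pmf_map)
  moreover have "measure (mutate (1 / real n) x) {y} \<le> measure (mutate (1 / real n) x) (?g -` {y})"
    using assms by (intro measure_pmf.finite_measure_mono) auto
  ultimately show ?thesis
    by (simp add: measure_pmf_single)
qed

lemma length_valley: "r \<le> n \<Longrightarrow> length (valley n r) = n"
  by (simp add: valley_def)

lemma rev_valley: "rev (valley n r) = optimum n r"
  by (simp add: valley_def optimum_def)

lemma rev_optimum: "rev (optimum n r) = valley n r"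
  by (simp add: valley_def optimum_def)

lemma valley_ne_optimum:
  assumes "0 < r" "r < n"
  shows "valley n r \<noteq> optimum n r"
proof -
  have "hd (valley n r) = False" "hd (optimum n r) = True"
    using assms by (simp_all add: valley_def optimum_def)
  then show ?thesis by auto
qed

lemma ones_rev: "ones (rev x) = ones x"
  by (simp add: ones_def flip: rev_filter)

lemma ones_le_length: "ones x \<le> length x"
  by (simp add: ones_def)

lemma Fork_eq_ones: "x \<notin> {valley n r, optimum n r} \<Longrightarrow> Fork n r x = ones x"
  by (simp add: Fork_def)

lemma Fork_ge: "x \<in> {valley n r, optimum n r} \<Longrightarrow> n + 1 \<le> Fork n r x"
  by (auto simp: Fork_def)

lemma rev_mem_targets_iff: "rev x \<in> {valley n r, optimum n r} \<longleftrightarrow> x \<in> {valley n r, optimum n r}"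
  by (metis insert_iff singleton_iff rev_rev_ident rev_valley rev_optimum)

lemma Fork_rev_le_iff:
  assumes "x \<notin> {valley n r, optimum n r}" "length x = n" "length y = n"
  shows "Fork n r (rev x) \<le> Fork n r (rev y) \<longleftrightarrow> Fork n r x \<le> Fork n r y"
proof -
  have "rev x \<notin> {valley n r, optimum n r}"
    using assms(1) rev_mem_targets_iff by blast
  then have Fork_x: "Fork n r (rev x) = ones x" "Fork n r x = ones x"
    using assms(1) by (simp_all add: Fork_eq_ones ones_rev)
  have "ones x \<le> n"
    using ones_le_length[of x] assms(2) by simp
  show ?thesis
  proof (cases "y \<in> {valley n r, optimum n r}")
    case True
    then have "n + 1 \<le> Fork n r y" "n + 1 \<le> Fork n r (rev y)"
      by (simp_all only: Fork_ge rev_mem_targets_iff)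
    with Fork_x \<open>ones x \<le> n\<close> show ?thesis by simp
  next
    case False
    then have "rev y \<notin> {valley n r, optimum n r}"
      using rev_mem_targets_iff by blast
    with False Fork_x show ?thesis by (simp add: Fork_eq_ones ones_rev)
  qed
qed

lemma map_pmf_rev_ea_step_Fork:
  assumes "x \<notin> {valley n r, optimum n r}" "length x = n"
  shows "map_pmf rev (ea_step (Fork n r) n x) = ea_step (Fork n r) n (rev x)"
  using assms by (intro map_pmf_ea_step map_pmf_rev_mutate Fork_rev_le_iff)
    (auto dest: set_pmf_mutate_length)

lemma measure_ea_step_Fork_compl_le:
  assumes "2 \<le> n" "r \<le> n" "length x = n" "x \<notin> {valley n r, optimum n r}"
  shows "measure (ea_step (Fork n r) n x) (- {valley n r, optimum n r}) \<le> 1 - (1 / real n) ^ n"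
proof -
  let ?M = "ea_step (Fork n r) n x"
  have "Fork n r x \<le> Fork n r (valley n r)"
    using assms(3,4) ones_le_length[of x] by (simp add: Fork_eq_ones Fork_def)
  then have "pmf (mutate (1 / real n) x) (valley n r) \<le> pmf ?M (valley n r)"
    by (rule pmf_ea_step_ge)
  moreover have "min (1 / real n) (1 - 1 / real n) ^ n \<le> pmf (mutate (1 / real n) x) (valley n r)"
    using pmf_mutate_ge[of "1 / real n" "valley n r" x] assms by (simp add: length_valley)
  moreover have "min (1 / real n) (1 - 1 / real n) = 1 / real n"
    using assms(1) by (simp add: field_simps)
  moreover have "measure ?M (- {valley n r, optimum n r}) \<le> measure ?M (- {valley n r})"
    by (intro measure_pmf.finite_measure_mono) auto
  moreover have "measure ?M (- {valley n r}) = 1 - pmf ?M (valley n r)"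
    using measure_pmf.prob_compl[of "{valley n r}" ?M]
    by (simp add: measure_pmf_single Compl_eq_Diff_UNIV)
  ultimately show ?thesis
    by simp
qed

lemma bool_lists_length_finite_nonempty:
  shows "finite {x :: bool list. length x = n}" and "{x :: bool list. length x = n} \<noteq> {}"
proof -
  show "finite {x :: bool list. length x = n}"
    using finite_lists_length_eq[of "UNIV :: bool set" n] by simp
  show "{x :: bool list. length x = n} \<noteq> {}"
    using length_replicate[of n True] by blast
qed

lemma set_pmf_init: "set_pmf (init n) = {x. length x = n}"
  unfolding init_def using bool_lists_length_finite_nonempty by (rule set_pmf_of_set[rotated])

lemma map_pmf_rev_init: "map_pmf rev (init n) = init n"
proof -
  have "rev ` {x :: bool list. length x = n} = {x. length x = n}"
    by (auto intro!: image_eqI[where x = "rev _"])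
  then show ?thesis
    unfolding init_def using bool_lists_length_finite_nonempty
    by (subst map_pmf_of_set_inj) (auto simp: inj_on_def)
qed

abbreviation Fork_chain :: "nat \<Rightarrow> nat \<Rightarrow> nat \<Rightarrow> bool list pmf" where
  "Fork_chain n r \<equiv> chain_dist (init n) (stop_on {valley n r, optimum n r} (ea_step (Fork n r) n))"

lemma set_pmf_stop_on_ea_step_length:
  "y \<in> set_pmf (stop_on T (ea_step f n) x) \<Longrightarrow> length y = length x"
  by (auto simp: stop_on_def split: if_splits dest: set_pmf_ea_step_length)

lemma map_pmf_rev_Fork_chain: "map_pmf rev (Fork_chain n r t) = Fork_chain n r t"
proof (rule map_pmf_chain_dist_invariant[where S = "{x. length x = n}"])
  fix x :: "bool list"
  assume "x \<in> {x. length x = n}"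
  then have "length x = n" by simp
  show "map_pmf rev (stop_on {valley n r, optimum n r} (ea_step (Fork n r) n) x)
      = stop_on {valley n r, optimum n r} (ea_step (Fork n r) n) (rev x)"
  proof (cases "x \<in> {valley n r, optimum n r}")
    case True
    then have "rev x \<in> {valley n r, optimum n r}"
      using rev_mem_targets_iff by blast
    with True show ?thesis by (simp only: stop_on_def if_True map_return_pmf)
  next
    case False
    then have "rev x \<notin> {valley n r, optimum n r}"
      using rev_mem_targets_iff by blast
    with False show ?thesis
      using map_pmf_rev_ea_step_Fork[OF False \<open>length x = n\<close>] by (simp only: stop_on_def if_False)
  qed
qed (auto simp: set_pmf_init map_pmf_rev_init dest: set_pmf_stop_on_ea_step_length)

lemma measure_Fork_chain_unabsorbed_le:
  assumes "2 \<le> n" "r \<le> n"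
  shows "measure (Fork_chain n r t) (- {valley n r, optimum n r}) \<le> (1 - (1 / real n) ^ n) ^ t"
proof (rule measure_chain_dist_stop_on_le[where S = "{x. length x = n}"])
  show "0 \<le> 1 - (1 / real n) ^ n"
    using assms(1) by (simp add: power_le_one)
qed (auto simp: set_pmf_init assms measure_ea_step_Fork_compl_le dest: set_pmf_ea_step_length)

lemma prob_valley_first_eq_pmf_Fork_chain:
  assumes "0 < r" "r < n"
  shows "measure_pmf.prob (ea_traj (Fork n r) n t) (valley_first n r) = pmf (Fork_chain n r t) (valley n r)"
proof -
  let ?P = "ea_traj (Fork n r) n t"
  let ?H = "first_hit {valley n r, optimum n r} -` {valley n r}"
  have "valley_first n r \<inter> set_pmf ?P = ?H \<inter> set_pmf ?P"
  proof (intro set_eqI)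
    fix xs
    show "xs \<in> valley_first n r \<inter> set_pmf ?P \<longleftrightarrow> xs \<in> ?H \<inter> set_pmf ?P"
    proof (cases "xs \<in> set_pmf ?P")
      case True
      then have "xs \<noteq> []"
        using length_ea_traj by fastforce
      with True show ?thesis
        using first_hit_eq_iff[OF valley_ne_optimum[OF assms] \<open>xs \<noteq> []\<close>]
        by (simp add: valley_first_def)
    qed simp
  qed
  then have "measure ?P (valley_first n r) = measure ?P ?H"
    by (metis measure_Int_set_pmf)
  also have "\<dots> = pmf (map_pmf (first_hit {valley n r, optimum n r}) ?P) (valley n r)"
    by (simp add: pmf_map)
  also have "\<dots> = pmf (Fork_chain n r t) (valley n r)"
    by (simp only: map_pmf_first_hit_ea_traj)
  finally show ?thesis .
qed

lemma pmf_Fork_chain_valley: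
  assumes "0 < r" "r < n"
  shows "pmf (Fork_chain n r t) (valley n r)
    = (1 - measure (Fork_chain n r t) (- {valley n r, optimum n r})) / 2"
proof -
  let ?D = "Fork_chain n r t"
  have "pmf ?D (optimum n r) = pmf (map_pmf rev ?D) (rev (valley n r))"
    by (simp only: map_pmf_rev_Fork_chain rev_valley)
  also have "\<dots> = pmf ?D (valley n r)"
    by (rule pmf_map_inj') simp
  finally have symm: "pmf ?D (optimum n r) = pmf ?D (valley n r)" .
  have "measure ?D {valley n r, optimum n r} = measure ?D {valley n r} + measure ?D {optimum n r}"
    using valley_ne_optimum[OF assms]
    by (subst insert_is_Un, intro measure_pmf.finite_measure_Union) auto
  moreover have "measure ?D {valley n r, optimum n r} + measure ?D (- {valley n r, optimum n r}) = 1"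
    using measure_pmf.prob_compl[of "{valley n r, optimum n r}" ?D]
    by (simp add: Compl_eq_Diff_UNIV)
  ultimately show ?thesis
    using symm by (simp add: measure_pmf_single)
qed

theorem lemma1:
  fixes n r :: nat
  assumes "r \<ge> 2" and "n \<ge> 2 * r"
  shows "(\<lambda>t. measure_pmf.prob (ea_traj (Fork n r) n t) (valley_first n r))
           \<longlonglongrightarrow> 1 / 2"
proof -
  have "0 < r" "r < n" "2 \<le> n"
    using assms by simp_all
  define q where "q = 1 - (1 / real n) ^ n"
  have "0 \<le> q" "q < 1"
    using \<open>2 \<le> n\<close> by (simp_all add: q_def power_le_one)
  let ?u = "\<lambda>t. measure (Fork_chain n r t) (- {valley n r, optimum n r})"
  have "?u \<longlonglongrightarrow> 0"
  proof (rule tendsto_sandwich[OF _ _ tendsto_const LIMSEQ_power_zero])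
    show "\<forall>\<^sub>F t in sequentially. 0 \<le> ?u t"
      by simp
    show "\<forall>\<^sub>F t in sequentially. ?u t \<le> q ^ t"
      using measure_Fork_chain_unabsorbed_le \<open>2 \<le> n\<close> \<open>r < n\<close> by (simp add: q_def)
  qed (use \<open>0 \<le> q\<close> \<open>q < 1\<close> in simp)
  then have "(\<lambda>t. (1 - ?u t) / 2) \<longlonglongrightarrow> (1 - 0) / 2"
    by (intro tendsto_intros) simp_all
  then show ?thesis
    using \<open>0 < r\<close> \<open>r < n\<close>
    by (simp add: prob_valley_first_eq_pmf_Fork_chain pmf_Fork_chain_valley)
qed

end
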